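(* For the GND game induced by the Shapley cost sharing mechanism, the function $$\Phi(p)=\sum_{e\in p}\sum_{i\in S_e} f_{i,e}\big(S_e^i(\psi_e)\cup\{i\}\big)$$ (where $S_e=\{i: e\in p_i\}$, $\psi_e$ is an arbitrary permutation of $S_e$, $S_e^i(\psi_e)$ is the set of players preceding $i$ in $\psi_e$, and $e \in p$ means $e\in\bigcup_i p_i$) satisfies $$\frac{1}{\lceil\max_j\alpha_j\rceil}\cdot C(p)\le\Phi(p)\le\mathcal{H}_N\cdot C(p)$$ for every strategy profile $p$, where $\mathcal{H}_N=\sum_{k=1}^N 1/k$.
   Context: GND instance: finite resource set $E$; players $i \in [N]$ with strategy collections $P_i \subseteq 2^E$ and weight vectors $w_i \in \mathbb{Z}_{\geq 1}^E$; constants $q\in\mathbb{Z}_{\ge1}$, $\alpha_1,\dots,\alpha_q > 1$; for each $e$, $\sigma_e \geq 0$, $\xi_{e,j} \geq 0$ (at least one positive), and $F_e(0)=0$, $F_e(l)=\sigma_e+\sum_j \xi_{e,j} l^{\alpha_j}$ for $l>0$. Profile $p=(p_1,\dots,p_N)$, $p_i\in P_i$; load $l_e^p=\sum_{i: e\in p_i} w_i(e)$; total cost $C(p)=\sum_e F_e(l_e^p)$. The Shapley cost share of $i\in X$ on $e$ when $X$ is the set of users of $e$ is $f_{i,e}(X)=\mathbb{E}\big[F_e\big(\sum_{i'\in X^i(\pi)}w_{i'}(e)+w_i(e)\big)-F_e\big(\sum_{i'\in X^i(\pi)}w_{i'}(e)\big)\big]$, where $\pi$ is a uniformly random permutation of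 $X$ and $X^i(\pi)$ is the set of players preceding $i$ in $\pi$. *)

theory Defs
  imports Complex_Main "HOL-Combinatorics.Multiset_Permutations"
begin

text \<open>Cost function F_e: F_e(0) = 0, F_e(l) = sigma_e + sum_{j<q} xi_{e,j} l^{alpha_j} for l > 0.
  The exponents are indexed by j in {0..<q} (instead of 1..q).\<close>
definition gnd_cost ::
  "('e \<Rightarrow> real) \<Rightarrow> ('e \<Rightarrow> nat \<Rightarrow> real) \<Rightarrow> (nat \<Rightarrow> real) \<Rightarrow> nat \<Rightarrow> 'e \<Rightarrow> nat \<Rightarrow> real" where
  "gnd_cost sigma xi alpha q e l =
     (if l = 0 then 0 else sigma e + (\<Sum>j<q. xi e j * (real l) powr (alpha j)))"

definition preceding :: "nat list \<Rightarrow> nat \<Rightarrow> nat set" where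
  "preceding ord i = set (takeWhile (\<lambda>x. x \<noteq> i) ord)"

definition wsum :: "(nat \<Rightarrow> 'e \<Rightarrow> nat) \<Rightarrow> 'e \<Rightarrow> nat set \<Rightarrow> nat" where
  "wsum w e X = (\<Sum>i\<in>X. w i e)"

definition shapley ::
  "('e \<Rightarrow> nat \<Rightarrow> real) \<Rightarrow> (nat \<Rightarrow> 'e \<Rightarrow> nat) \<Rightarrow> 'e \<Rightarrow> nat set \<Rightarrow> nat \<Rightarrow> real" where
  "shapley F w e X i =
     (\<Sum>ord\<in>permutations_of_set X.
        F e (wsum w e (preceding ord i) + w i e) - F e (wsum w e (preceding ord i)))
     / real (card (permutations_of_set X))"

definition users :: "nat \<Rightarrow> (nat \<Rightarrow> 'e set) \<Rightarrow> 'e \<Rightarrow> nat set" where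
  "users N p e = {i. i < N \<and> e \<in> p i}"

definition load :: "nat \<Rightarrow> (nat \<Rightarrow> 'e \<Rightarrow> nat) \<Rightarrow> (nat \<Rightarrow> 'e set) \<Rightarrow> 'e \<Rightarrow> nat" where
  "load N w p e = wsum w e (users N p e)"

definition total_cost ::
  "nat \<Rightarrow> 'e set \<Rightarrow> ('e \<Rightarrow> nat \<Rightarrow> real) \<Rightarrow> (nat \<Rightarrow> 'e \<Rightarrow> nat) \<Rightarrow> (nat \<Rightarrow> 'e set) \<Rightarrow> real" where
  "total_cost N E F w p = (\<Sum>e\<in>E. F e (load N w p e))"

definition potential ::
  "nat \<Rightarrow> ('e \<Rightarrow> nat \<Rightarrow> real) \<Rightarrow> (nat \<Rightarrow> 'e \<Rightarrow> nat) \<Rightarrow> (nat \<Rightarrow> 'e set) \<Rightarrow> ('e \<Rightarrow> nat list) \<Rightarrow> real" where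
  "potential N F w p psi =
     (\<Sum>e\<in>(\<Union>i<N. p i). \<Sum>i\<in>users N p e.
        shapley F w e (preceding (psi e) i \<union> {i}) i)"

end

(* The Shapley share of player i in the coalition insert i Y is the marginal contribution
   P(insert i Y) - P(Y) of the Hart--Mas-Colell potential
     P(X) = sum over T <= X of (|T|-1)! (|X|-|T|)! / |X|! * F(w(T)),
   so along any ordering of S_e the shares telescope and Phi(p) = sum over used e of P_e(S_e).
   Grouping the subsets of X (|X| = n) by size, P(X) = sum_{t=1..n} (1/t) * A_t, where A_t is the
   average of F(w(T)) over the t-subsets T of X.
   Upper bound: F is monotone, so A_t <= F(w(X)) and P(X) <= H_n F(w(X)) <= H_N F(w(X)).
   Lower bound: the constant sigma_e contributes sigma_e H_n >= sigma_e.  For a power l^a,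
   Jensen's inequality gives A_t >= (t W / n)^a with W = w(X), and
   sum_t (t W / n)^a / t = (W / n)^a sum_t t^(a-1) >= W^a / a >= W^a / ceil(max alpha). *)

theory Submission
  imports Defs "HOL-Analysis.Harmonic_Numbers"
begin

section \<open>Orderings and predecessor sets\<close>

lemma takeWhile_neq_append_Cons: "i \<notin> set xs \<Longrightarrow> takeWhile (\<lambda>x. x \<noteq> i) (xs @ i # ys) = xs"
  by (induction xs) auto

lemma dropWhile_neq_append_Cons: "i \<notin> set xs \<Longrightarrow> dropWhile (\<lambda>x. x \<noteq> i) (xs @ i # ys) = i # ys"
  by (induction xs) auto

lemma append_Cons_eq_append_Cons:
  assumes "xs @ i # ys = xs' @ i # ys'" and "i \<notin> set xs" and "i \<notin> set xs'"
  shows "xs = xs' \<and> ys = ys'"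
  using assms takeWhile_neq_append_Cons[of i xs ys] takeWhile_neq_append_Cons[of i xs' ys']
    dropWhile_neq_append_Cons[of i xs ys] dropWhile_neq_append_Cons[of i xs' ys']
  by simp

lemma preceding_append_Cons: "i \<notin> set xs \<Longrightarrow> preceding (xs @ i # ys) i = set xs"
  by (simp add: preceding_def takeWhile_neq_append_Cons)

lemma notin_preceding: "i \<notin> preceding ord i"
  by (auto simp: preceding_def dest: set_takeWhileD)

lemma permutations_with_preceding_eq:
  assumes "i \<notin> Y" and "T \<subseteq> Y"
  shows "{ord \<in> permutations_of_set (insert i Y). preceding ord i = T}
       = (\<lambda>(xs, ys). xs @ i # ys) ` (permutations_of_set T \<times> permutations_of_set (Y - T))"
proof (intro equalityI subsetI)
  fix ord assume "ord \<in> {ord \<in> permutations_of_set (insert i Y). preceding ord i = T}"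
  then have ord: "set ord = insert i Y" "distinct ord" "preceding ord i = T"
    by (auto simp: permutations_of_set_def)
  obtain ys zs where split: "ord = ys @ i # zs" "i \<notin> set ys"
    using split_list_first[of i ord] ord(1) by auto
  then have "set ys = T"
    using ord(3) by (simp add: preceding_append_Cons)
  with ord split assms(1) have "(ys, zs) \<in> permutations_of_set T \<times> permutations_of_set (Y - T)"
    by (auto simp: permutations_of_set_def)
  with split(1) show "ord \<in> (\<lambda>(xs, ys). xs @ i # ys) ` (permutations_of_set T \<times> permutations_of_set (Y - T))"
    by force
next
  fix ord assume "ord \<in> (\<lambda>(xs, ys). xs @ i # ys) ` (permutations_of_set T \<times> permutations_of_set (Y - T))"
  then obtain ys zs where ord: "ord = ys @ i # zs" and ys: "set ys = T" "distinct ys"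
      and zs: "set zs = Y - T" "distinct zs"
    by (auto simp: permutations_of_set_def)
  have "i \<notin> T"
    using assms by blast
  have "set ord = insert i Y"
    using ord ys zs assms(2) by auto
  moreover have "distinct ord"
    using \<open>i \<notin> T\<close> assms(1) ord ys zs by auto
  moreover have "preceding ord i = T"
    using \<open>i \<notin> T\<close> ord ys by (simp add: preceding_append_Cons)
  ultimately show "ord \<in> {ord \<in> permutations_of_set (insert i Y). preceding ord i = T}"
    unfolding permutations_of_set_def by blast
qed

lemma card_permutations_with_preceding:
  assumes "finite Y" and "i \<notin> Y" and "T \<subseteq> Y"
  shows "card {ord \<in> permutations_of_set (insert i Y). preceding ord i = T}
       = fact (card T) * fact (card Y - card T)"
proof -
  have T: "finite T" "i \<notin> T"
    using assms rev_finite_subset by auto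
  have "inj_on (\<lambda>(xs, ys). xs @ i # ys) (permutations_of_set T \<times> permutations_of_set (Y - T))"
  proof (rule inj_on_subset)
    show "inj_on (\<lambda>(xs, ys). xs @ i # ys) {(xs, ys). i \<notin> set xs}"
      by (rule inj_onI) (clarify, blast dest: append_Cons_eq_append_Cons)
  qed (use T(2) in \<open>auto simp: permutations_of_set_def\<close>)
  then show ?thesis
    using assms T by (simp add: permutations_with_preceding_eq card_image card_cartesian_product card_Diff_subset)
qed

lemma sum_permutations_by_preceding:
  assumes "finite Y" and "i \<notin> Y"
  shows "(\<Sum>ord\<in>permutations_of_set (insert i Y). h (preceding ord i))
       = (\<Sum>T\<in>Pow Y. fact (card T) * fact (card Y - card T) * h T)"
proof -
  have "(\<lambda>ord. preceding ord i) ` permutations_of_set (insert i Y) \<subseteq> Pow Y"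
    using notin_preceding[of i]
    by (fastforce simp: preceding_def permutations_of_set_def dest: set_takeWhileD)
  then have "(\<Sum>ord\<in>permutations_of_set (insert i Y). h (preceding ord i))
      = (\<Sum>T\<in>Pow Y. \<Sum>ord\<in>{ord \<in> permutations_of_set (insert i Y). preceding ord i = T}. h (preceding ord i))"
    using assms(1) by (intro sum.group[symmetric]) simp_all
  also have "\<dots> = (\<Sum>T\<in>Pow Y. \<Sum>ord\<in>{ord \<in> permutations_of_set (insert i Y). preceding ord i = T}. h T)"
    by (intro sum.cong) auto
  also have "\<dots> = (\<Sum>T\<in>Pow Y. fact (card T) * fact (card Y - card T) * h T)"
    using assms by (intro sum.cong refl) (simp add: card_permutations_with_preceding)
  finally show ?thesis .
qed

lemma sum_preceding_telescope:
  fixes \<Phi> :: "nat set \<Rightarrow> 'a::ab_group_add"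
  assumes "distinct ord"
  shows "(\<Sum>i\<in>set ord. \<Phi> (insert i (preceding ord i)) - \<Phi> (preceding ord i)) = \<Phi> (set ord) - \<Phi> {}"
  using assms
proof (induction ord rule: rev_induct)
  case Nil
  then show ?case by simp
next
  case (snoc x xs)
  have "preceding (xs @ [x]) i = preceding xs i" if "i \<in> set xs" for i
    using that snoc.prems by (auto simp: preceding_def)
  moreover have "preceding (xs @ [x]) x = set xs"
    using snoc.prems preceding_append_Cons[of x xs "[]"] by simp
  ultimately show ?case
    using snoc by simp
qed

section \<open>Subsets of a given cardinality\<close>

lemma sum_Pow_by_card:
  assumes "finite X"
  shows "(\<Sum>T\<in>Pow X. g T) = (\<Sum>t=0..card X. \<Sum>T\<in>{T. T \<subseteq> X \<and> card T = t}. g T)"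
proof -
  have "(\<Sum>t=0..card X. \<Sum>T\<in>{T \<in> Pow X. card T = t}. g T) = (\<Sum>T\<in>Pow X. g T)"
    using assms by (intro sum.group) (auto intro: card_mono)
  then show ?thesis
    by simp
qed

lemma card_subsets_containing:
  assumes "finite X" and "i \<in> X" and "0 < t"
  shows "card {T. T \<subseteq> X \<and> card T = t \<and> i \<in> T} = (card X - 1) choose (t - 1)"
proof -
  have "{T. T \<subseteq> X \<and> card T = t \<and> i \<in> T} = insert i ` {U. U \<subseteq> X - {i} \<and> card U = t - 1}"
  proof (intro equalityI subsetI)
    fix T assume T: "T \<in> {T. T \<subseteq> X \<and> card T = t \<and> i \<in> T}"
    then have "T - {i} \<in> {U. U \<subseteq> X - {i} \<and> card U = t - 1}"
      using rev_finite_subset[OF assms(1)] by auto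
    then show "T \<in> insert i ` {U. U \<subseteq> X - {i} \<and> card U = t - 1}"
      using T by (auto intro!: image_eqI[where x = "T - {i}"])
  next
    fix T assume "T \<in> insert i ` {U. U \<subseteq> X - {i} \<and> card U = t - 1}"
    then obtain U where U: "T = insert i U" "U \<subseteq> X - {i}" "card U = t - 1"
      by blast
    moreover have "finite U" "i \<notin> U"
      using U(2) rev_finite_subset[OF assms(1)] by auto
    ultimately show "T \<in> {T. T \<subseteq> X \<and> card T = t \<and> i \<in> T}"
      using assms by auto
  qed
  moreover have "inj_on (insert i) {U. U \<subseteq> X - {i} \<and> card U = t - 1}"
    by (auto simp: inj_on_def)
  ultimately show ?thesis
    using assms n_subsets[of "X - {i}" "t - 1"] by (simp add: card_image)
qed

lemma sum_subsets_card_sum: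
  fixes v :: "'a \<Rightarrow> real"
  assumes "finite X" and "0 < t"
  shows "(\<Sum>T\<in>{T. T \<subseteq> X \<and> card T = t}. \<Sum>i\<in>T. v i) = ((card X - 1) choose (t - 1)) * (\<Sum>i\<in>X. v i)"
proof -
  let ?S = "{T. T \<subseteq> X \<and> card T = t}"
  have "(\<Sum>T\<in>?S. \<Sum>i\<in>T. v i) = (\<Sum>T\<in>?S. \<Sum>i\<in>{i \<in> X. i \<in> T}. v i)"
    by (intro sum.cong refl) auto
  also have "\<dots> = (\<Sum>i\<in>X. \<Sum>T\<in>{T \<in> ?S. i \<in> T}. v i)"
    using assms(1) by (intro sum.swap_restrict) auto
  also have "\<dots> = (\<Sum>i\<in>X. ((card X - 1) choose (t - 1)) * v i)"
    using card_subsets_containing[OF assms(1) _ assms(2)] by (intro sum.cong refl) simp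
  finally show ?thesis
    by (simp add: sum_distrib_left)
qed

section \<open>Inequalities for real powers\<close>

lemma mean_powr_le_mean_of_powr:
  assumes "finite A" and "A \<noteq> {}" and "\<And>x. x \<in> A \<Longrightarrow> 0 < f x" and "1 \<le> a"
  shows "((\<Sum>x\<in>A. f x) / card A) powr a \<le> (\<Sum>x\<in>A. f x powr a) / card A"
  using convex_on_sum[OF assms(1,2) powr_convex[OF assms(4)], of "\<lambda>_. 1 / card A" f] assms
  by (simp add: sum_divide_distrib)

lemma powr_div_le_sum_powr:
  assumes "1 \<le> a"
  shows "real n powr a / a \<le> (\<Sum>t=1..n. real t powr (a - 1))"
proof (induction n)
  case 0
  then show ?case by simp
next
  case (Suc n)
  have "real (Suc n) powr a \<le> real n powr a + a * real (Suc n) powr (a - 1)"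
  proof (cases "n = 0")
    case True
    then show ?thesis using assms by simp
  next
    case False
    have "a * real (Suc n) powr (a - 1) * (real n - real (Suc n)) \<le> real n powr a - real (Suc n) powr a"
      using False
      by (intro convex_on_imp_above_tangent[where A = "{0<..}", OF powr_convex[OF assms]])
         (auto intro!: derivative_eq_intros simp: interior_open)
    then show ?thesis by simp
  qed
  then have "real (Suc n) powr a / a \<le> (real n powr a + a * real (Suc n) powr (a - 1)) / a"
    using assms by (intro divide_right_mono) auto
  also have "\<dots> = real n powr a / a + real (Suc n) powr (a - 1)"
    using assms by (simp add: add_divide_distrib)
  finally show ?case
    using Suc.IH by simp
qed

lemma mean_powr_subset_sums_ge:
  fixes v :: "'a \<Rightarrow> real"
  assumes "finite X" and "\<And>i. i \<in> X \<Longrightarrow> 0 < v i" and "1 \<le> a" and "0 < t" and "t \<le> card X"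
  shows "(real t * (\<Sum>i\<in>X. v i) / card X) powr a
       \<le> (\<Sum>T\<in>{T. T \<subseteq> X \<and> card T = t}. (\<Sum>i\<in>T. v i) powr a) / (card X choose t)"
proof -
  define n where "n = card X"
  define S where "S = {T. T \<subseteq> X \<and> card T = t}"
  have card: "card S = n choose t"
    using assms(1) by (simp add: S_def n_def n_subsets)
  then have "0 < card S"
    using assms(5) by (simp add: n_def)
  then have S: "finite S" "S \<noteq> {}"
    by (simp_all add: card_gt_0_iff)
  have pos: "0 < (\<Sum>i\<in>T. v i)" if "T \<in> S" for T
    using that assms(2,4) rev_finite_subset[OF assms(1)] by (intro sum_pos) (auto simp: S_def)
  have "real t * real (n choose t) = real n * real ((n - 1) choose (t - 1))"
    using times_binomial_minus1_eq[of t n] assms(4) by (simp flip: of_nat_mult)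
  then have "real ((n - 1) choose (t - 1)) = real t * real (n choose t) / n"
    using assms(4,5) by (simp add: n_def field_simps)
  moreover have "(\<Sum>T\<in>S. \<Sum>i\<in>T. v i) = real ((n - 1) choose (t - 1)) * (\<Sum>i\<in>X. v i)"
    using sum_subsets_card_sum[OF assms(1,4), of v] by (simp add: S_def n_def)
  ultimately have "(\<Sum>T\<in>S. \<Sum>i\<in>T. v i) / card S = real t * (\<Sum>i\<in>X. v i) / n"
    using \<open>0 < card S\<close> by (simp add: card)
  then show ?thesis
    unfolding S_def[symmetric] n_def[symmetric]
    using mean_powr_le_mean_of_powr[of S "\<lambda>T. \<Sum>i\<in>T. v i", OF S pos assms(3)] by (simp add: card)
qed

lemma harm_ge_one: "0 < n \<Longrightarrow> 1 \<le> (harm n :: real)"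
  using harm_mono[of 1 n] by (simp add: harm_def)

section \<open>The Shapley potential\<close>

definition shapley_coeff :: "nat \<Rightarrow> nat \<Rightarrow> real" where
  "shapley_coeff t n = (if t = 0 then 0 else fact (t - 1) * fact (n - t) / fact n)"

text \<open>Hart and Mas-Colell's potential of the cost function \<open>G\<close> on coalitions: Shapley cost shares
  are exactly its marginal contributions (see \<open>shapley_insert_eq_potential_diff\<close>).\<close>

definition shapley_potential :: "('a set \<Rightarrow> real) \<Rightarrow> 'a set \<Rightarrow> real" where
  "shapley_potential G X = (\<Sum>T\<in>Pow X. shapley_coeff (card T) (card X) * G T)"

lemma shapley_coeff_diff:
  assumes "0 < t" and "t \<le> m"
  shows "shapley_coeff t m - shapley_coeff t (Suc m) = fact t * fact (m - t) / fact (Suc m)"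
proof -
  define s r where "s = t - 1" and "r = m - t"
  have idx: "t - 1 = s" "m - t = r" "Suc m - t = Suc r" "real m = real s + real r + 1"
    and fact_t: "(fact t :: real) = (s + 1) * fact s"
    using assms by (simp_all add: s_def r_def Suc_diff_le fact_reduce)
  \<comment> \<open>Over the common denominator \<open>(m + 1)!\<close> the difference is \<open>(t - 1)! (m - t)! ((m + 1) - (m + 1 - t))\<close>.\<close>
  have "x * y / F - x * ((r + 1) * y) / ((M + 1) * F) = (s + 1) * x * y / ((M + 1) * F)"
    if "0 < F" and "0 < M + 1" and "M = s + r + 1" for x y F M s r :: real
  proof -
    have "x * y / F = (M + 1) * x * y / ((M + 1) * F)"
      using that by simp
    then show ?thesis
      using that by (simp add: diff_divide_distrib[symmetric] algebra_simps)
  qed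
  from this[of "fact m", OF _ _ idx(4)] show ?thesis
    using assms(1) unfolding shapley_coeff_def idx(1-3) fact_t fact_Suc by (simp add: algebra_simps)
qed

lemma shapley_coeff_eq:
  assumes "0 < t" and "t \<le> n"
  shows "shapley_coeff t n = 1 / (real t * real (n choose t))"
proof -
  have "real (n choose t) = fact n / (fact t * fact (n - t))"
    using assms(2) by (rule binomial_fact)
  moreover have "(fact t :: real) = t * fact (t - 1)"
    using assms(1) by (simp add: fact_reduce)
  ultimately show ?thesis
    using assms(1) by (simp add: shapley_coeff_def)
qed

lemma shapley_potential_empty [simp]: "shapley_potential G {} = 0"
  by (simp add: shapley_potential_def shapley_coeff_def)

lemma shapley_potential_insert:
  assumes "finite Y" and "i \<notin> Y"
  shows "shapley_potential G (insert i Y)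
       = (\<Sum>T\<in>Pow Y. shapley_coeff (card T) (Suc (card Y)) * G T)
         + (\<Sum>T\<in>Pow Y. fact (card T) * fact (card Y - card T) / fact (Suc (card Y)) * G (insert i T))"
proof -
  have "inj_on (insert i) (Pow Y)" and disjoint: "Pow Y \<inter> insert i ` Pow Y = {}"
    using assms(2) by (auto simp: inj_on_def)
  then have "(\<Sum>T\<in>insert i ` Pow Y. shapley_coeff (card T) (Suc (card Y)) * G T)
      = (\<Sum>T\<in>Pow Y. shapley_coeff (card (insert i T)) (Suc (card Y)) * G (insert i T))"
    by (simp add: sum.reindex)
  also have "\<dots> = (\<Sum>T\<in>Pow Y. fact (card T) * fact (card Y - card T) / fact (Suc (card Y)) * G (insert i T))"
  proof (intro sum.cong refl)
    fix T assume "T \<in> Pow Y"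
    then have "finite T" and "i \<notin> T"
      using assms(2) rev_finite_subset[OF assms(1)] by auto
    then have "card (insert i T) = Suc (card T)"
      by simp
    then show "shapley_coeff (card (insert i T)) (Suc (card Y)) * G (insert i T)
        = fact (card T) * fact (card Y - card T) / fact (Suc (card Y)) * G (insert i T)"
      by (simp add: shapley_coeff_def)
  qed
  finally show ?thesis
    using assms disjoint unfolding shapley_potential_def Pow_insert by (simp add: sum.union_disjoint)
qed

lemma shapley_potential_insert_diff:
  assumes "finite Y" and "i \<notin> Y" and "G {} = 0"
  shows "shapley_potential G (insert i Y) - shapley_potential G Y
       = (\<Sum>T\<in>Pow Y. fact (card T) * fact (card Y - card T) / fact (Suc (card Y)) * (G (insert i T) - G T))"
proof -
  define c :: "'a set \<Rightarrow> real" where "c T = fact (card T) * fact (card Y - card T) / fact (Suc (card Y))" for T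
  have "shapley_coeff (card T) (Suc (card Y)) * G T - shapley_coeff (card T) (card Y) * G T = - c T * G T"
    if "T \<in> Pow Y" for T
  proof (cases "T = {}")
    case True
    then show ?thesis
      using assms(3) by simp
  next
    case False
    with that assms(1) have "0 < card T" and "card T \<le> card Y"
      by (auto simp: card_gt_0_iff card_mono rev_finite_subset)
    then have "shapley_coeff (card T) (Suc (card Y)) - shapley_coeff (card T) (card Y) = - c T"
      using shapley_coeff_diff[of "card T" "card Y"] by (simp add: c_def)
    then show ?thesis
      by (simp flip: left_diff_distrib)
  qed
  then have "(\<Sum>T\<in>Pow Y. shapley_coeff (card T) (Suc (card Y)) * G T) - shapley_potential G Y
      = (\<Sum>T\<in>Pow Y. - c T * G T)"
    unfolding shapley_potential_def sum_subtractf[symmetric] by (rule sum.cong[OF refl])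
  then show ?thesis
    unfolding shapley_potential_insert[OF assms(1,2)] c_def[symmetric]
    by (simp add: right_diff_distrib sum_subtractf sum_negf)
qed

lemma shapley_insert_eq_potential_diff:
  assumes "finite Y" and "i \<notin> Y" and "F e 0 = 0"
  shows "shapley F w e (insert i Y) i
       = shapley_potential (\<lambda>T. F e (wsum w e T)) (insert i Y) - shapley_potential (\<lambda>T. F e (wsum w e T)) Y"
proof -
  define G where "G = (\<lambda>T. F e (wsum w e T))"
  have "G {} = 0"
    using assms(3) by (simp add: G_def wsum_def)
  have insert: "wsum w e (insert i T) = wsum w e T + w i e" if "T \<in> Pow Y" for T
  proof -
    have "finite T" "i \<notin> T"
      using that assms(2) rev_finite_subset[OF assms(1)] by auto
    then show ?thesis
      by (simp add: wsum_def)
  qed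
  have "(\<Sum>ord\<in>permutations_of_set (insert i Y).
        F e (wsum w e (preceding ord i) + w i e) - F e (wsum w e (preceding ord i)))
      = (\<Sum>T\<in>Pow Y. fact (card T) * fact (card Y - card T) * (F e (wsum w e T + w i e) - F e (wsum w e T)))"
    by (rule sum_permutations_by_preceding[OF assms(1,2)])
  also have "\<dots> = (\<Sum>T\<in>Pow Y. fact (card T) * fact (card Y - card T) * (G (insert i T) - G T))"
    by (intro sum.cong refl) (simp add: G_def insert)
  finally have "shapley F w e (insert i Y) i
      = (\<Sum>T\<in>Pow Y. fact (card T) * fact (card Y - card T) * (G (insert i T) - G T)) / fact (Suc (card Y))"
    using assms(1,2) by (simp add: shapley_def card_permutations_of_set del: fact_Suc)
  also have "\<dots> = shapley_potential G (insert i Y) - shapley_potential G Y"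
    unfolding shapley_potential_insert_diff[where G = G, OF assms(1,2) \<open>G {} = 0\<close>] sum_divide_distrib
    by (intro sum.cong refl) simp
  finally show ?thesis
    by (simp add: G_def)
qed

lemma sum_shapley_preceding_eq_potential:
  assumes "ord \<in> permutations_of_set X" and "F e 0 = 0"
  shows "(\<Sum>i\<in>X. shapley F w e (preceding ord i \<union> {i}) i) = shapley_potential (\<lambda>T. F e (wsum w e T)) X"
proof -
  have X: "X = set ord" "distinct ord"
    using assms(1) by (auto simp: permutations_of_set_def)
  have "finite (preceding ord i)" for i
    by (simp add: preceding_def)
  then have "shapley F w e (insert i (preceding ord i)) i
      = shapley_potential (\<lambda>T. F e (wsum w e T)) (insert i (preceding ord i))
        - shapley_potential (\<lambda>T. F e (wsum w e T)) (preceding ord i)" for i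
    using shapley_insert_eq_potential_diff notin_preceding assms(2) by metis
  then show ?thesis
    using sum_preceding_telescope[OF X(2), of "shapley_potential (\<lambda>T. F e (wsum w e T))"] X(1)
    by simp
qed

lemma shapley_potential_by_card:
  assumes "finite X"
  shows "shapley_potential G X
       = (\<Sum>t=1..card X. (\<Sum>T\<in>{T. T \<subseteq> X \<and> card T = t}. G T) / (real t * real (card X choose t)))"
proof -
  have "shapley_potential G X
      = (\<Sum>t=0..card X. \<Sum>T\<in>{T. T \<subseteq> X \<and> card T = t}. shapley_coeff t (card X) * G T)"
    unfolding shapley_potential_def sum_Pow_by_card[OF assms] by (intro sum.cong refl) auto
  also have "\<dots> = (\<Sum>t=1..card X. shapley_coeff t (card X) * (\<Sum>T\<in>{T. T \<subseteq> X \<and> card T = t}. G T))"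
    by (simp add: sum.atLeast_Suc_atMost[of 0] shapley_coeff_def sum_distrib_left)
  also have "\<dots> = (\<Sum>t=1..card X. (\<Sum>T\<in>{T. T \<subseteq> X \<and> card T = t}. G T) / (real t * real (card X choose t)))"
    by (intro sum.cong refl) (simp add: shapley_coeff_eq)
  finally show ?thesis .
qed

lemma shapley_potential_const:
  assumes "finite X"
  shows "shapley_potential (\<lambda>_. c) X = c * harm (card X)"
proof -
  have "(\<Sum>T\<in>{T. T \<subseteq> X \<and> card T = t}. c) / (real t * real (card X choose t)) = c * inverse (real t)"
    if "t \<in> {1..card X}" for t
    using that by (simp add: n_subsets[OF assms] field_simps)
  then show ?thesis
    unfolding shapley_potential_by_card[OF assms] harm_def sum_distrib_left by (rule sum.cong[OF refl])
qed

lemma shapley_potential_mono: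
  assumes "\<And>T. T \<subseteq> X \<Longrightarrow> G T \<le> H T"
  shows "shapley_potential G X \<le> shapley_potential H X"
  unfolding shapley_potential_def using assms
  by (intro sum_mono mult_left_mono) (auto simp: shapley_coeff_def)

lemma shapley_potential_le_harm:
  assumes "finite X" and "\<And>T. T \<subseteq> X \<Longrightarrow> G T \<le> G X"
  shows "shapley_potential G X \<le> harm (card X) * G X"
  using shapley_potential_mono[of X G "\<lambda>_. G X"] assms shapley_potential_const[OF assms(1)]
  by (simp add: mult.commute)

lemma shapley_potential_cong:
  assumes "\<And>T. T \<subseteq> X \<Longrightarrow> T \<noteq> {} \<Longrightarrow> G T = H T"
  shows "shapley_potential G X = shapley_potential H X"
  unfolding shapley_potential_def using assms
  by (intro sum.cong refl) (auto simp: shapley_coeff_def card_gt_0_iff)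

lemma shapley_potential_affine:
  assumes "finite X"
  shows "shapley_potential (\<lambda>T. c + (\<Sum>j\<in>J. d j * G j T)) X
       = c * harm (card X) + (\<Sum>j\<in>J. d j * shapley_potential (G j) X)"
proof -
  have "shapley_potential (\<lambda>T. c + (\<Sum>j\<in>J. d j * G j T)) X
      = shapley_potential (\<lambda>_. c) X
        + (\<Sum>T\<in>Pow X. \<Sum>j\<in>J. d j * (shapley_coeff (card T) (card X) * G j T))"
    unfolding shapley_potential_def
    by (simp add: distrib_left sum.distrib sum_distrib_left mult.left_commute)
  also have "(\<Sum>T\<in>Pow X. \<Sum>j\<in>J. d j * (shapley_coeff (card T) (card X) * G j T))
      = (\<Sum>j\<in>J. d j * shapley_potential (G j) X)"
    unfolding shapley_potential_def sum_distrib_left by (rule sum.swap)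
  finally show ?thesis
    using shapley_potential_const[OF assms] by simp
qed

lemma shapley_potential_powr_ge:
  fixes v :: "'a \<Rightarrow> real"
  assumes "finite X" and "\<And>i. i \<in> X \<Longrightarrow> 0 < v i" and "1 \<le> a"
  shows "(\<Sum>i\<in>X. v i) powr a / a \<le> shapley_potential (\<lambda>T. (\<Sum>i\<in>T. v i) powr a) X"
proof (cases "X = {}")
  case True
  then show ?thesis by simp
next
  case False
  define n where "n = card X"
  define W where "W = (\<Sum>i\<in>X. v i)"
  have n: "0 < n"
    using assms(1) False by (simp add: n_def card_gt_0_iff)
  have W: "0 < W"
    using assms(1,2) False by (simp add: W_def sum_pos)
  have "W powr a / a = (W / n) powr a * (real n powr a / a)"
    using n W by (simp add: powr_divide)
  also have "\<dots> \<le> (W / n) powr a * (\<Sum>t=1..n. real t powr (a - 1))"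
    using powr_div_le_sum_powr[OF assms(3)] by (intro mult_left_mono) auto
  also have "\<dots> = (\<Sum>t=1..n. (real t * W / n) powr a / t)"
    unfolding sum_distrib_left
  proof (intro sum.cong refl)
    fix t assume "t \<in> {1..n}"
    then have "(real t * W / n) powr a = real t powr a * (W / n) powr a"
      using powr_mult[of "real t" "W / n" a] by simp
    then show "(W / n) powr a * real t powr (a - 1) = (real t * W / n) powr a / t"
      using \<open>t \<in> {1..n}\<close> by (simp add: powr_diff)
  qed
  also have "\<dots> \<le> (\<Sum>t=1..n. (\<Sum>T\<in>{T. T \<subseteq> X \<and> card T = t}. (\<Sum>i\<in>T. v i) powr a)
                             / (real t * real (n choose t)))"
  proof (rule sum_mono)
    fix t assume t: "t \<in> {1..n}"
    then have "(real t * W / n) powr a / t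
        \<le> (\<Sum>T\<in>{T. T \<subseteq> X \<and> card T = t}. (\<Sum>i\<in>T. v i) powr a) / (n choose t) / t"
      using mean_powr_subset_sums_ge[OF assms, where t = t] by (intro divide_right_mono) (auto simp: n_def W_def)
    then show "(real t * W / n) powr a / t
        \<le> (\<Sum>T\<in>{T. T \<subseteq> X \<and> card T = t}. (\<Sum>i\<in>T. v i) powr a) / (real t * real (n choose t))"
      by (simp add: divide_divide_eq_left mult.commute)
  qed
  also have "\<dots> = shapley_potential (\<lambda>T. (\<Sum>i\<in>T. v i) powr a) X"
    unfolding shapley_potential_by_card[OF assms(1)] n_def ..
  finally show ?thesis
    by (simp add: W_def)
qed

section \<open>Polynomial cost functions\<close>

lemma real_wsum: "real (wsum w e T) = (\<Sum>i\<in>T. real (w i e))"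
  by (simp add: wsum_def)

lemma wsum_pos:
  assumes "finite T" and "T \<noteq> {}" and "\<And>i. i \<in> T \<Longrightarrow> 1 \<le> w i e"
  shows "0 < wsum w e T"
proof -
  have "0 < w i e" if "i \<in> T" for i
    using assms(3)[OF that] by simp
  then show ?thesis
    unfolding wsum_def using assms(1,2) by (intro sum_pos) auto
qed

lemma shapley_potential_gnd_cost:
  assumes "finite X" and "\<And>i. i \<in> X \<Longrightarrow> 1 \<le> w i e"
  shows "shapley_potential (\<lambda>T. gnd_cost sigma xi alpha q e (wsum w e T)) X
       = sigma e * harm (card X)
         + (\<Sum>j<q. xi e j * shapley_potential (\<lambda>T. real (wsum w e T) powr alpha j) X)"
proof -
  have "gnd_cost sigma xi alpha q e (wsum w e T) = sigma e + (\<Sum>j<q. xi e j * real (wsum w e T) powr alpha j)"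
    if "T \<subseteq> X" and "T \<noteq> {}" for T
  proof -
    have "0 < wsum w e T"
      by (rule wsum_pos) (use that assms rev_finite_subset[OF assms(1)] in auto)
    then show ?thesis
      by (simp add: gnd_cost_def)
  qed
  then have "shapley_potential (\<lambda>T. gnd_cost sigma xi alpha q e (wsum w e T)) X
      = shapley_potential (\<lambda>T. sigma e + (\<Sum>j<q. xi e j * real (wsum w e T) powr alpha j)) X"
    by (rule shapley_potential_cong)
  also have "\<dots> = sigma e * harm (card X)
         + (\<Sum>j<q. xi e j * shapley_potential (\<lambda>T. real (wsum w e T) powr alpha j) X)"
    by (rule shapley_potential_affine[OF assms(1)])
  finally show ?thesis .
qed

lemma gnd_cost_potential_ge:
  assumes "finite X" and "X \<noteq> {}" and "\<And>i. i \<in> X \<Longrightarrow> 1 \<le> w i e"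
    and "0 \<le> sigma e" and "\<And>j. j < q \<Longrightarrow> 0 \<le> xi e j"
    and "\<And>j. j < q \<Longrightarrow> 1 \<le> alpha j" and "\<And>j. j < q \<Longrightarrow> alpha j \<le> D" and "1 \<le> D"
  shows "gnd_cost sigma xi alpha q e (wsum w e X) / D
       \<le> shapley_potential (\<lambda>T. gnd_cost sigma xi alpha q e (wsum w e T)) X"
proof -
  define W where "W = real (wsum w e X)"
  have "0 < wsum w e X"
    using assms(1-3) by (rule wsum_pos)
  then have "gnd_cost sigma xi alpha q e (wsum w e X) / D = sigma e / D + (\<Sum>j<q. xi e j * W powr alpha j / D)"
    by (simp add: gnd_cost_def W_def add_divide_distrib sum_divide_distrib)
  also have "\<dots> \<le> sigma e * harm (card X) + (\<Sum>j<q. xi e j * (W powr alpha j / alpha j))"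
  proof (rule add_mono)
    have "sigma e / D \<le> sigma e"
      using assms(4,8) by (simp add: divide_le_eq mult_le_cancel_left1)
    also have "\<dots> \<le> sigma e * harm (card X)"
      using assms(1,2,4) harm_ge_one[of "card X"] by (simp add: card_gt_0_iff mult_le_cancel_left1)
    finally show "sigma e / D \<le> sigma e * harm (card X)" .
    show "(\<Sum>j<q. xi e j * W powr alpha j / D) \<le> (\<Sum>j<q. xi e j * (W powr alpha j / alpha j))"
    proof (rule sum_mono)
      fix j assume "j \<in> {..<q}"
      then have "1 \<le> alpha j" and "alpha j \<le> D"
        using assms(6,7) by auto
      then have "W powr alpha j / D \<le> W powr alpha j / alpha j"
        by (intro divide_left_mono) auto
      then show "xi e j * W powr alpha j / D \<le> xi e j * (W powr alpha j / alpha j)"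
        using assms(5) \<open>j \<in> {..<q}\<close> by (simp add: mult_left_mono flip: times_divide_eq_right)
    qed
  qed
  also have "\<dots> \<le> sigma e * harm (card X)
      + (\<Sum>j<q. xi e j * shapley_potential (\<lambda>T. real (wsum w e T) powr alpha j) X)"
    unfolding W_def real_wsum using assms(1,3,5,6)
    by (intro add_left_mono sum_mono mult_left_mono shapley_potential_powr_ge) (auto simp: Suc_le_eq)
  also have "\<dots> = shapley_potential (\<lambda>T. gnd_cost sigma xi alpha q e (wsum w e T)) X"
    using assms(1,3) by (rule shapley_potential_gnd_cost[symmetric])
  finally show ?thesis .
qed

lemma gnd_cost_potential_le:
  assumes "finite X" and "X \<noteq> {}" and "\<And>i. i \<in> X \<Longrightarrow> 1 \<le> w i e"
    and "0 \<le> sigma e" and "\<And>j. j < q \<Longrightarrow> 0 \<le> xi e j" and "\<And>j. j < q \<Longrightarrow> 0 \<le> alpha j"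
    and "card X \<le> n"
  shows "shapley_potential (\<lambda>T. gnd_cost sigma xi alpha q e (wsum w e T)) X
       \<le> harm n * gnd_cost sigma xi alpha q e (wsum w e X)"
proof -
  define W where "W = real (wsum w e X)"
  have "shapley_potential (\<lambda>T. real (wsum w e T) powr alpha j) X \<le> harm (card X) * W powr alpha j"
    if "j < q" for j
    unfolding W_def using assms(1) that assms(6)
    by (intro shapley_potential_le_harm powr_mono2) (auto simp: wsum_def intro: sum_mono2 sum_nonneg)
  note bound = this
  have "shapley_potential (\<lambda>T. gnd_cost sigma xi alpha q e (wsum w e T)) X
      = sigma e * harm (card X)
        + (\<Sum>j<q. xi e j * shapley_potential (\<lambda>T. real (wsum w e T) powr alpha j) X)"
    using assms(1,3) by (rule shapley_potential_gnd_cost)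
  also have "\<dots> \<le> sigma e * harm (card X) + (\<Sum>j<q. xi e j * (harm (card X) * W powr alpha j))"
    using bound assms(5) by (intro add_left_mono sum_mono mult_left_mono) auto
  also have "\<dots> = harm (card X) * gnd_cost sigma xi alpha q e (wsum w e X)"
    using wsum_pos[where w = w and e = e, OF assms(1-3)] by (simp add: gnd_cost_def W_def algebra_simps sum_distrib_left)
  also have "\<dots> \<le> harm n * gnd_cost sigma xi alpha q e (wsum w e X)"
    using assms(4,5,7) harm_mono[OF assms(7)]
    by (intro mult_right_mono) (auto simp: gnd_cost_def intro!: add_nonneg_nonneg sum_nonneg)
  finally show ?thesis .
qed

lemma total_cost_eq_sum_used:
  assumes "finite E" and "(\<Union>i<N. p i) \<subseteq> E" and "\<And>e. F e 0 = 0"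
  shows "total_cost N E F w p = (\<Sum>e\<in>(\<Union>i<N. p i). F e (wsum w e (users N p e)))"
proof -
  have "users N p e = {}" if "e \<notin> (\<Union>i<N. p i)" for e
    using that by (auto simp: users_def)
  then show ?thesis
    unfolding total_cost_def load_def
    by (intro sum.mono_neutral_right[OF assms(1,2)]) (simp add: wsum_def assms(3))
qed

lemma potential_eq_sum_shapley_potential:
  assumes "\<And>e. e \<in> (\<Union>i<N. p i) \<Longrightarrow> psi e \<in> permutations_of_set (users N p e)"
    and "\<And>e. F e 0 = 0"
  shows "potential N F w p psi
       = (\<Sum>e\<in>(\<Union>i<N. p i). shapley_potential (\<lambda>T. F e (wsum w e T)) (users N p e))"
  unfolding potential_def using assms by (intro sum.cong refl sum_shapley_preceding_eq_potential) auto

lemma users_subset: "users N p e \<subseteq> {..<N}"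
  by (auto simp: users_def)

lemma users_of_used_resource:
  assumes "e \<in> (\<Union>i<N. p i)"
  shows "finite (users N p e)" and "users N p e \<noteq> {}" and "card (users N p e) \<le> N"
  using assms card_mono[OF _ users_subset] finite_subset[OF users_subset] by (auto simp: users_def)

lemma gnd_game_potential_ge:
  assumes "finite E" and "(\<Union>i<N. p i) \<subseteq> E" and "\<And>i e. i < N \<Longrightarrow> e \<in> E \<Longrightarrow> 1 \<le> w i e"
    and "\<And>e. e \<in> E \<Longrightarrow> 0 \<le> sigma e" and "\<And>e j. e \<in> E \<Longrightarrow> j < q \<Longrightarrow> 0 \<le> xi e j"
    and "\<And>j. j < q \<Longrightarrow> 1 \<le> alpha j" and "\<And>j. j < q \<Longrightarrow> alpha j \<le> D" and "1 \<le> D"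
    and "\<And>e. e \<in> (\<Union>i<N. p i) \<Longrightarrow> psi e \<in> permutations_of_set (users N p e)"
  shows "total_cost N E (gnd_cost sigma xi alpha q) w p / D \<le> potential N (gnd_cost sigma xi alpha q) w p psi"
proof -
  let ?F = "gnd_cost sigma xi alpha q"
  have F0: "\<And>e. ?F e 0 = 0"
    by (simp add: gnd_cost_def)
  have "total_cost N E ?F w p / D = (\<Sum>e\<in>(\<Union>i<N. p i). ?F e (wsum w e (users N p e)) / D)"
    using total_cost_eq_sum_used[where F = ?F, OF assms(1,2) F0] by (simp add: sum_divide_distrib)
  also have "\<dots> \<le> (\<Sum>e\<in>(\<Union>i<N. p i). shapley_potential (\<lambda>T. ?F e (wsum w e T)) (users N p e))"
  proof (rule sum_mono)
    fix e assume e: "e \<in> (\<Union>i<N. p i)"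
    then have "e \<in> E"
      using assms(2) by blast
    then have "\<And>i. i \<in> users N p e \<Longrightarrow> 1 \<le> w i e"
      using assms(3) by (auto simp: users_def)
    with \<open>e \<in> E\<close> show "?F e (wsum w e (users N p e)) / D \<le> shapley_potential (\<lambda>T. ?F e (wsum w e T)) (users N p e)"
      using users_of_used_resource[OF e] assms(4-8)
      by (intro gnd_cost_potential_ge) auto
  qed
  also have "\<dots> = potential N ?F w p psi"
    using potential_eq_sum_shapley_potential[where F = ?F, OF assms(9) F0] by simp
  finally show ?thesis .
qed

lemma gnd_game_potential_le:
  assumes "finite E" and "(\<Union>i<N. p i) \<subseteq> E" and "\<And>i e. i < N \<Longrightarrow> e \<in> E \<Longrightarrow> 1 \<le> w i e"
    and "\<And>e. e \<in> E \<Longrightarrow> 0 \<le> sigma e" and "\<And>e j. e \<in> E \<Longrightarrow> j < q \<Longrightarrow> 0 \<le> xi e j"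
    and "\<And>j. j < q \<Longrightarrow> 0 \<le> alpha j"
    and "\<And>e. e \<in> (\<Union>i<N. p i) \<Longrightarrow> psi e \<in> permutations_of_set (users N p e)"
  shows "potential N (gnd_cost sigma xi alpha q) w p psi \<le> harm N * total_cost N E (gnd_cost sigma xi alpha q) w p"
proof -
  let ?F = "gnd_cost sigma xi alpha q"
  have F0: "\<And>e. ?F e 0 = 0"
    by (simp add: gnd_cost_def)
  have "potential N ?F w p psi = (\<Sum>e\<in>(\<Union>i<N. p i). shapley_potential (\<lambda>T. ?F e (wsum w e T)) (users N p e))"
    using potential_eq_sum_shapley_potential[where F = ?F, OF assms(7) F0] .
  also have "\<dots> \<le> (\<Sum>e\<in>(\<Union>i<N. p i). harm N * ?F e (wsum w e (users N p e)))"
  proof (rule sum_mono)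
    fix e assume e: "e \<in> (\<Union>i<N. p i)"
    then have "e \<in> E"
      using assms(2) by blast
    then have "\<And>i. i \<in> users N p e \<Longrightarrow> 1 \<le> w i e"
      using assms(3) by (auto simp: users_def)
    with \<open>e \<in> E\<close> show "shapley_potential (\<lambda>T. ?F e (wsum w e T)) (users N p e) \<le> harm N * ?F e (wsum w e (users N p e))"
      using users_of_used_resource[OF e] assms(4-6)
      by (intro gnd_cost_potential_le) auto
  qed
  also have "\<dots> = harm N * total_cost N E ?F w p"
    using total_cost_eq_sum_used[where F = ?F, OF assms(1,2) F0] by (simp add: sum_distrib_left)
  finally show ?thesis .
qed

theorem theorem7p2:
  fixes E :: "'e set" and N :: nat and P :: "nat \<Rightarrow> 'e set set"
    and w :: "nat \<Rightarrow> 'e \<Rightarrow> nat" and q :: nat and alpha :: "nat \<Rightarrow> real"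
    and sigma :: "'e \<Rightarrow> real" and xi :: "'e \<Rightarrow> nat \<Rightarrow> real"
    and p :: "nat \<Rightarrow> 'e set" and psi :: "'e \<Rightarrow> nat list"
  assumes "finite E"
    and "\<And>i. i < N \<Longrightarrow> P i \<subseteq> Pow E"
    and "\<And>i e. i < N \<Longrightarrow> e \<in> E \<Longrightarrow> w i e \<ge> 1"
    and "q \<ge> 1"
    and "\<And>j. j < q \<Longrightarrow> alpha j > 1"
    and "\<And>e. e \<in> E \<Longrightarrow> sigma e \<ge> 0"
    and "\<And>e j. e \<in> E \<Longrightarrow> j < q \<Longrightarrow> xi e j \<ge> 0"
    and "\<And>e. e \<in> E \<Longrightarrow> \<exists>j<q. xi e j > 0"
    and "\<And>i. i < N \<Longrightarrow> p i \<in> P i"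
    and "\<And>e. e \<in> (\<Union>i<N. p i) \<Longrightarrow> psi e \<in> permutations_of_set (users N p e)"
  shows "1 / real_of_int \<lceil>Max (alpha ` {..<q})\<rceil> * total_cost N E (gnd_cost sigma xi alpha q) w p
           \<le> potential N (gnd_cost sigma xi alpha q) w p psi
       \<and> potential N (gnd_cost sigma xi alpha q) w p psi
           \<le> (\<Sum>k=1..N. 1 / real k) * total_cost N E (gnd_cost sigma xi alpha q) w p"
proof -
  define D where "D = real_of_int \<lceil>Max (alpha ` {..<q})\<rceil>"
  have used: "(\<Union>i<N. p i) \<subseteq> E"
    using assms(2,9) by blast
  have alpha: "1 \<le> alpha j" "alpha j \<le> D" if "j < q" for j
  proof -
    have "alpha j \<le> Max (alpha ` {..<q})"
      using that by (intro Max_ge) auto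
    then show "alpha j \<le> D"
      unfolding D_def using le_of_int_ceiling order_trans by blast
  qed (use assms(5)[OF that] in simp)
  then have "1 \<le> D"
    using assms(4) by fastforce
  have "total_cost N E (gnd_cost sigma xi alpha q) w p / D \<le> potential N (gnd_cost sigma xi alpha q) w p psi"
    using assms(1) used assms(3,6,7) alpha \<open>1 \<le> D\<close> assms(10) by (rule gnd_game_potential_ge)
  moreover have "potential N (gnd_cost sigma xi alpha q) w p psi
      \<le> harm N * total_cost N E (gnd_cost sigma xi alpha q) w p"
    using assms(1) used assms(3,6,7) less_imp_le[OF order.strict_trans[OF zero_less_one assms(5)]] assms(10)
    by (rule gnd_game_potential_le)
  ultimately show ?thesis
    by (simp add: D_def harm_def inverse_eq_divide)
qed

end
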